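(* Let $F$ be a finite group acting on the $n$-torus $\mathbb{T}^n$ by continuous group automorphisms, such that the quotient space $\mathbb{T}^n/F$ is homeomorphic to $\mathbb{T}^n$. Then $F$ acts trivially on $\mathbb{T}^n$. *)

theory Defs
  imports "HOL-Analysis.Analysis" "HOL-Algebra.Group_Action"
begin

text \<open>The n-torus, realised as the compact group of vectors of unit complex numbers
  (the product of n circles), with componentwise multiplication as group law.
  The dimension n is the cardinality of the finite index type 'n.\<close>

definition torus :: "(complex ^ 'n) set" where
  "torus = {z. \<forall>i. cmod (z $ i) = 1}"

definition torus_top :: "(complex ^ 'n) topology" where
  "torus_top = top_of_set torus"

definition torus_automorphism :: "(complex ^ 'n \<Rightarrow> complex ^ 'n) \<Rightarrow> bool" where
  "torus_automorphism f \<longleftrightarrow>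
     continuous_map torus_top torus_top f \<and>
     bij_betw f torus torus \<and>
     (\<forall>z\<in>torus. \<forall>w\<in>torus. f (z * w) = f z * f w)"

definition quotient_topology :: "'a topology \<Rightarrow> ('a \<Rightarrow> 'b) \<Rightarrow> 'b topology" where
  "quotient_topology X f =
     topology (\<lambda>U. U \<subseteq> f ` topspace X \<and> openin X {x \<in> topspace X. f x \<in> U})"

definition orbit_space :: "('g, 'm) monoid_scheme \<Rightarrow> ('g \<Rightarrow> 'a \<Rightarrow> 'a) \<Rightarrow> 'a topology
                             \<Rightarrow> 'a set topology" where
  "orbit_space G \<phi> X = quotient_topology X (orbit G \<phi>)"

end

(* Let Phi : T^n -> T^n be the orbit map followed by a homeomorphism T^n/F = T^n. Lift Phi and
   each automorphism g in F to continuous maps Lambda, B of R^n; on the lattice Z^n they act by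
   integer matrices: Lambda (t + v) = Lambda t + A v and B (t + v) = B t + C v. As Phi o g = Phi,
   the difference Lambda o B - Lambda is constant.
   The matrix A is nonsingular: if m is integral with m A = 0, then m . Lambda is lattice periodic,
   hence bounded, and it is constant on the fibres of Phi (it changes by a constant along B, and
   boundedness along the iterates of B forces that constant to be 0). So m . Lambda descends to a
   continuous K on T^n with z^m = exp (2 pi i K z), and a nontrivial character has no continuous
   logarithm. Evaluating Lambda (B (t + v)) in two ways gives A C v = A v, so C is the identity,
   and an endomorphism of T^n whose lift commutes with the lattice translations is the identity. *)

theory Submission
  imports Defs
begin

definition torus_exp :: "real^'n \<Rightarrow> complex^'n" where
  "torus_exp t = (\<chi> j. cis (2 * pi * t $ j))"

definition int_vec :: "real^'n \<Rightarrow> bool" where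
  "int_vec v \<longleftrightarrow> (\<forall>j. v $ j \<in> \<int>)"

definition int_matrix :: "real^'m^'n \<Rightarrow> bool" where
  "int_matrix A \<longleftrightarrow> (\<forall>i j. A $ i $ j \<in> \<int>)"

lemma int_vec_axis [simp]: "int_vec (axis i 1)"
  by (simp add: int_vec_def axis_def)

lemma int_vec_matrix_vector_mult: "int_matrix A \<Longrightarrow> int_vec v \<Longrightarrow> int_vec (A *v v)"
  by (simp add: int_matrix_def int_vec_def matrix_vector_mult_def Ints_sum)

lemma inner_int_vec: "int_vec m \<Longrightarrow> int_vec v \<Longrightarrow> m \<bullet> v \<in> \<int>"
  by (simp add: int_vec_def inner_vec_def Ints_sum)

lemma int_vec_decomposition:
  fixes t :: "real^'n"
  obtains s v where "s \<in> cbox 0 1" "int_vec v" "t = s + v"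
proof
  show "t - (\<chi> j. of_int \<lfloor>t $ j\<rfloor>) \<in> cbox 0 1"
    by (auto simp: mem_box_cart frac_def[symmetric] less_imp_le[OF frac_lt_1])
qed (auto simp: int_vec_def)

lemma cis_2pi_eq_iff: "cis (2 * pi * a) = cis (2 * pi * b) \<longleftrightarrow> a - b \<in> \<int>"
proof -
  have "cis (2 * pi * a) = cis (2 * pi * (a - b)) * cis (2 * pi * b)"
    by (simp add: cis_mult algebra_simps)
  then have "cis (2 * pi * a) = cis (2 * pi * b) \<longleftrightarrow> cis (2 * pi * (a - b)) = 1"
    by (metis cis_neq_zero mult_cancel_right2)
  also have "\<dots> \<longleftrightarrow> a - b \<in> \<int>"
  proof
    assume "cis (2 * pi * (a - b)) = 1"
    then have "cos (2 * pi * (a - b)) = 1"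
      by (metis cis.sel(1) one_complex.sel(1))
    then obtain n :: int where "2 * pi * (a - b) = of_int n * 2 * pi"
      using cos_one_2pi_int by blast
    then show "a - b \<in> \<int>"
      by simp
  qed (rule cis_multiple_2pi)
  finally show ?thesis .
qed

lemma torus_exp_in_torus [simp]: "torus_exp t \<in> torus"
  by (simp add: torus_exp_def torus_def)

lemma torus_exp_0 [simp]: "torus_exp 0 = 1"
  by (simp add: torus_exp_def vec_eq_iff)

lemma torus_exp_add: "torus_exp (s + t) = torus_exp s * torus_exp t"
  by (simp add: torus_exp_def vec_eq_iff cis_mult algebra_simps)

lemma torus_exp_eq_iff: "torus_exp s = torus_exp t \<longleftrightarrow> int_vec (s - t)"
  by (simp add: torus_exp_def vec_eq_iff int_vec_def cis_2pi_eq_iff)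

lemma torus_exp_add_int_vec: "int_vec v \<Longrightarrow> torus_exp (t + v) = torus_exp t"
  by (simp add: torus_exp_eq_iff)

lemma continuous_on_torus_exp: "continuous_on S torus_exp"
  unfolding torus_exp_def by (intro continuous_on_vec_lambda continuous_intros)

lemma torus_exp_cbox: "torus_exp ` cbox 0 1 = torus"
proof
  show "torus \<subseteq> torus_exp ` cbox 0 1"
  proof
    fix z :: "complex^'n"
    assume z: "z \<in> torus"
    define t :: "real^'n" where "t = (\<chi> j. frac (Arg (z $ j) / (2 * pi)))"
    have "cis (2 * pi * t $ j) = z $ j" for j
    proof -
      have "cmod (z $ j) = 1"
        using z by (simp add: torus_def)
      then have "z $ j = cis (Arg (z $ j))"
        using cis_Arg[of "z $ j"] by (cases "z $ j = 0") (auto simp: sgn_eq)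
      moreover have "cis (2 * pi * t $ j) = cis (2 * pi * (Arg (z $ j) / (2 * pi)))"
        unfolding cis_2pi_eq_iff t_def by (simp add: frac_def)
      ultimately show ?thesis
        by simp
    qed
    moreover have "t \<in> cbox 0 1"
      by (simp add: t_def mem_box_cart less_imp_le[OF frac_lt_1])
    ultimately show "z \<in> torus_exp ` cbox 0 1"
      by (auto simp: torus_exp_def vec_eq_iff intro!: image_eqI[of _ _ t])
  qed
qed auto

lemma continuous_Ints_valued_constant:
  fixes f :: "'a::topological_space \<Rightarrow> real"
  assumes "connected S" "continuous_on S f" "\<And>x. x \<in> S \<Longrightarrow> f x \<in> \<int>"
    and "x \<in> S" "y \<in> S"
  shows "f x = f y"
proof -
  have "f constant_on S"
  proof (rule continuous_discrete_range_constant[OF assms(1,2)])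
    fix x
    assume "x \<in> S"
    then show "\<exists>e>0. \<forall>y. y \<in> S \<and> f y \<noteq> f x \<longrightarrow> e \<le> norm (f y - f x)"
      using assms(3) by (intro exI[of _ 1]) (auto simp: Ints_nonzero_abs_ge1)
  qed
  then show ?thesis
    using assms(4,5) by (auto simp: constant_on_def)
qed

lemma torus_lift_exists:
  fixes f :: "'a::real_normed_vector \<Rightarrow> complex^'n"
  assumes "continuous_on UNIV f" "\<And>t. f t \<in> torus"
  obtains \<Theta> where "continuous_on UNIV \<Theta>" "\<And>t. f t = torus_exp (\<Theta> t)"
proof -
  have "\<exists>L. continuous_on UNIV L \<and> (\<forall>t. f t $ j = exp (L t))" for j
  proof -
    have "f t $ j \<noteq> 0" for t
      using assms(2)[of t] unfolding torus_def by (metis (mono_tags) mem_Collect_eq norm_zero zero_neq_one)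
    moreover have "continuous_on UNIV (\<lambda>t. f t $ j)"
      using assms(1) by (intro continuous_intros)
    ultimately show ?thesis
      using continuous_logarithm_on_simply_connected[of UNIV "\<lambda>t. f t $ j"]
      by (metis convex_UNIV convex_imp_simply_connected locally_path_connected_UNIV UNIV_I)
  qed
  then obtain L where L: "\<And>j. continuous_on UNIV (L j)" "\<And>j t. f t $ j = exp (L j t)"
    by metis
  show ?thesis
  proof
    show "continuous_on UNIV (\<lambda>t. \<chi> j. Im (L j t) / (2 * pi))"
      by (intro continuous_on_vec_lambda continuous_intros L) auto
    show "f t = torus_exp (\<chi> j. Im (L j t) / (2 * pi))" for t
    proof -
      have "f t $ j = cis (Im (L j t))" for j
      proof -
        have "cmod (f t $ j) = 1"
          using assms(2)[of t] by (simp add: torus_def)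
        then have "Re (L j t) = 0"
          using L(2)[of t j] by simp
        then have "L j t = \<i> * Im (L j t)"
          by (simp add: complex_eq_iff)
        then show ?thesis
          using L(2)[of t j] by (metis cis_conv_exp)
      qed
      then show ?thesis
        by (simp add: torus_exp_def vec_eq_iff)
    qed
  qed
qed

lemma torus_lifts_differ_by_constant:
  fixes a b :: "'a::topological_space \<Rightarrow> real^'n"
  assumes "connected S" "continuous_on S a" "continuous_on S b"
    and "\<And>x. x \<in> S \<Longrightarrow> torus_exp (a x) = torus_exp (b x)"
    and "x \<in> S" "y \<in> S"
  shows "a x - b x = a y - b y"
proof -
  have "(a x - b x) $ j = (a y - b y) $ j" for j
    using assms by (intro continuous_Ints_valued_constant[where f = "\<lambda>x. (a x - b x) $ j"])
      (auto intro!: continuous_intros simp: torus_exp_eq_iff int_vec_def)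
  then show ?thesis
    by (simp add: vec_eq_iff)
qed

lemma shift_by_int_vec:
  fixes D :: "real^'n \<Rightarrow> 'b::real_vector"
  assumes shift: "\<And>t i. D (t + axis i 1) = D t + a i" and "int_vec v"
  shows "D (t + v) = D t + (\<Sum>i\<in>UNIV. v $ i *\<^sub>R a i)"
proof -
  have nat_multiple: "D (t + real n *\<^sub>R axis i 1) = D t + real n *\<^sub>R a i" for n t i
  proof (induction n arbitrary: t)
    case (Suc n)
    have "D (t + real (Suc n) *\<^sub>R axis i 1) = D ((t + real n *\<^sub>R axis i 1) + axis i 1)"
      by (simp add: algebra_simps)
    also have "\<dots> = D t + real (Suc n) *\<^sub>R a i"
      by (simp only: shift Suc.IH) (simp add: algebra_simps)
    finally show ?case .
  qed simp
  have int_multiple: "D (t + of_int k *\<^sub>R axis i 1) = D t + of_int k *\<^sub>R a i" for k t i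
  proof (cases "k \<ge> 0")
    case True
    then show ?thesis
      using nat_multiple[of t "nat k"] by simp
  next
    case False
    have "D ((t + of_int k *\<^sub>R axis i 1) + real (nat (- k)) *\<^sub>R axis i 1)
        = D (t + of_int k *\<^sub>R axis i 1) + real (nat (- k)) *\<^sub>R a i"
      by (rule nat_multiple)
    then show ?thesis
      using False by (simp add: algebra_simps)
  qed
  have "D (t + (\<Sum>i\<in>S. v $ i *\<^sub>R axis i 1)) = D t + (\<Sum>i\<in>S. v $ i *\<^sub>R a i)" if "finite S" for S
    using that
  proof (induction S arbitrary: t rule: finite_induct)
    case (insert i S)
    obtain k where "v $ i = of_int k"
      using \<open>int_vec v\<close> by (metis int_vec_def Ints_cases)
    then show ?case
      using insert int_multiple[of t k i] insert.IH[of "t + v $ i *\<^sub>R axis i 1"]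
      by (simp add: algebra_simps)
  qed simp
  moreover have "(\<Sum>i\<in>UNIV. v $ i *\<^sub>R axis i 1) = v"
    using basis_expansion[of v] by (simp add: scalar_mult_eq_scaleR)
  ultimately show ?thesis
    by (metis finite)
qed

lemma lattice_periodic_bounded:
  fixes u :: "real^'n \<Rightarrow> 'b::real_normed_vector"
  assumes "continuous_on UNIV u" "\<And>t v. int_vec v \<Longrightarrow> u (t + v) = u t"
  obtains B where "\<And>t. norm (u t) \<le> B"
proof -
  have "compact (u ` cbox 0 1)"
    by (rule compact_continuous_image) (auto intro: continuous_on_subset[OF assms(1)])
  then obtain B where B: "\<And>x. x \<in> u ` cbox 0 1 \<Longrightarrow> norm x \<le> B"
    by (meson bounded_iff compact_imp_bounded)
  have "norm (u t) \<le> B" for t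
  proof -
    obtain s v where "s \<in> cbox 0 1" "int_vec v" "t = s + v"
      by (rule int_vec_decomposition)
    then show ?thesis
      using B assms(2) by auto
  qed
  then show ?thesis
    using that by blast
qed

lemma bounded_multiples_imp_zero:
  fixes c :: real
  assumes "\<And>n::nat. \<bar>real n * c\<bar> \<le> B"
  shows "c = 0"
proof (rule ccontr)
  assume "c \<noteq> 0"
  then obtain n where "B < real n * \<bar>c\<bar>"
    using ex_less_of_nat_mult[of "\<bar>c\<bar>" B] by auto
  with assms[of n] show False
    by (simp add: abs_mult)
qed

lemma bounded_additive_imp_zero:
  fixes R :: "'a::real_vector \<Rightarrow> 'b::real_normed_vector"
  assumes "\<And>s t. R (s + t) = R s + R t" "\<And>t. norm (R t) \<le> B"
  shows "R t = 0"
proof -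
  have "R (real n *\<^sub>R t) = real n *\<^sub>R R t" for n
  proof (induction n)
    case 0
    show ?case
      using assms(1)[of 0 0] by simp
  next
    case (Suc n)
    then show ?case
      using assms(1)[of "real n *\<^sub>R t" t] by (simp add: algebra_simps)
  qed
  then have "\<bar>real n * norm (R t)\<bar> \<le> B" for n
    using assms(2)[of "real n *\<^sub>R t"] by simp
  then have "norm (R t) = 0"
    by (rule bounded_multiples_imp_zero)
  then show ?thesis
    by simp
qed

lemma torus_map_lift:
  fixes \<Phi> :: "complex^'n \<Rightarrow> complex^'m"
  assumes "continuous_on torus \<Phi>" "\<Phi> ` torus \<subseteq> torus"
  obtains \<Lambda> :: "real^'n \<Rightarrow> real^'m" and A :: "real^'n^'m"
  where "continuous_on UNIV \<Lambda>" "\<And>t. \<Phi> (torus_exp t) = torus_exp (\<Lambda> t)"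
    and "int_matrix A" "\<And>t v. int_vec v \<Longrightarrow> \<Lambda> (t + v) = \<Lambda> t + A *v v"
proof -
  have "continuous_on UNIV (\<Phi> \<circ> torus_exp)"
    using assms by (intro continuous_on_compose continuous_on_torus_exp) (auto elim: continuous_on_subset)
  moreover have "(\<Phi> \<circ> torus_exp) t \<in> torus" for t
    using assms(2) by auto
  ultimately obtain \<Lambda> where cont: "continuous_on UNIV \<Lambda>" and lift: "\<And>t. \<Phi> (torus_exp t) = torus_exp (\<Lambda> t)"
    using torus_lift_exists by (metis comp_apply)
  define A :: "real^'n^'m" where "A = (\<chi> j i. (\<Lambda> (axis i 1) - \<Lambda> 0) $ j)"
  have shift: "\<Lambda> (t + axis i 1) = \<Lambda> t + column i A" for t i
  proof -
    have "\<Lambda> (t + axis i 1) - \<Lambda> t = \<Lambda> (0 + axis i 1) - \<Lambda> 0"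
      by (intro torus_lifts_differ_by_constant[where a = "\<lambda>t. \<Lambda> (t + axis i 1)" and b = \<Lambda>])
        (auto intro!: continuous_on_compose2[OF cont] continuous_intros
              simp flip: lift simp: torus_exp_add_int_vec)
    then show ?thesis
      by (simp only: A_def column_def vec_lambda_beta vec_lambda_eta) (simp add: algebra_simps)
  qed
  show ?thesis
  proof
    have "int_vec (\<Lambda> (axis i 1) - \<Lambda> 0)" for i
      using lift[of 0] lift[of "axis i 1"] torus_exp_add_int_vec[of "axis i 1" 0]
      by (simp flip: torus_exp_eq_iff)
    then show "int_matrix A"
      by (simp add: int_matrix_def A_def int_vec_def)
    show "\<Lambda> (t + v) = \<Lambda> t + A *v v" if "int_vec v" for t v
      using shift_by_int_vec[of \<Lambda> "\<lambda>i. column i A", OF shift that]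
      by (simp add: matrix_mult_sum scalar_mult_eq_scaleR)
  qed (use cont lift in auto)
qed

lemma torus_hom_one:
  fixes f :: "complex^'n \<Rightarrow> complex^'m"
  assumes "\<forall>z\<in>torus. \<forall>w\<in>torus. f (z * w) = f z * f w" "f ` torus \<subseteq> torus"
  shows "f 1 = 1"
proof -
  have one: "1 \<in> torus"
    using torus_exp_in_torus[of 0] by simp
  then have "f 1 $ j \<noteq> 0" for j
    using assms(2) unfolding torus_def by (metis (mono_tags) image_subset_iff mem_Collect_eq norm_zero zero_neq_one)
  moreover have "f 1 $ j = f 1 $ j * f 1 $ j" for j
    using assms(1) one by (metis mult_1 vector_mult_component)
  ultimately show ?thesis
    by (simp add: vec_eq_iff)
qed

lemma torus_hom_lift_additive:
  fixes f :: "complex^'n \<Rightarrow> complex^'m" and B :: "real^'n \<Rightarrow> real^'m"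
  assumes "\<forall>z\<in>torus. \<forall>w\<in>torus. f (z * w) = f z * f w"
    and "continuous_on UNIV B" "\<And>t. f (torus_exp t) = torus_exp (B t)"
  shows "B (s + t) = B s + B t - B 0"
proof -
  let ?a = "\<lambda>p :: (real^'n) \<times> (real^'n). B (fst p + snd p)"
  let ?b = "\<lambda>p :: (real^'n) \<times> (real^'n). B (fst p) + B (snd p)"
  have "torus_exp (?a p) = torus_exp (?b p)" for p
    using assms(1) by (simp flip: assms(3) add: torus_exp_add)
  then have "?a (s, t) - ?b (s, t) = ?a (0, 0) - ?b (0, 0)"
    by (intro torus_lifts_differ_by_constant[of UNIV])
      (auto intro!: continuous_intros continuous_on_compose2[OF assms(2)])
  then show ?thesis
    by (simp add: algebra_simps)
qed

lemma torus_hom_eq_id_if_lift_fixes_lattice: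
  fixes f :: "complex^'n \<Rightarrow> complex^'n"
  assumes hom: "\<forall>z\<in>torus. \<forall>w\<in>torus. f (z * w) = f z * f w" and "f ` torus \<subseteq> torus"
    and cont: "continuous_on UNIV B" and lift: "\<And>t. f (torus_exp t) = torus_exp (B t)"
    and lattice: "\<And>t v. int_vec v \<Longrightarrow> B (t + v) = B t + v"
    and "x \<in> torus"
  shows "f x = x"
proof -
  define R where "R t = B t - B 0 - t" for t
  have "continuous_on UNIV R"
    unfolding R_def by (intro continuous_intros cont)
  moreover have "R (t + v) = R t" if "int_vec v" for t v
    using that lattice[of v t] by (simp add: R_def)
  ultimately obtain C where bound: "\<And>t. norm (R t) \<le> C"
    by (rule lattice_periodic_bounded) auto
  have "R (s + t) = R s + R t" for s t
    using torus_hom_lift_additive[OF hom cont lift, of s t] by (simp add: R_def algebra_simps)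
  then have "R t = 0" for t
    using bound by (rule bounded_additive_imp_zero)
  then have affine: "B t = t + B 0" for t
    using R_def[of t] by (simp add: algebra_simps)
  have "f (torus_exp t) = torus_exp t * torus_exp (B 0)" for t
    using lift[of t] affine[of t] by (simp add: torus_exp_add)
  moreover have "torus_exp (B 0) = 1"
    using lift[of 0] torus_hom_one[OF hom assms(2)] by simp
  ultimately have "f (torus_exp t) = torus_exp t" for t
    by simp
  moreover obtain t where "x = torus_exp t"
    using \<open>x \<in> torus\<close> torus_exp_cbox by blast
  ultimately show ?thesis
    by simp
qed

lemma int_vec_character_has_no_continuous_logarithm:
  assumes "int_vec m" "continuous_on torus K" "\<And>t. m \<bullet> t - K (torus_exp t) \<in> \<int>"
  shows "m = 0"
proof -
  have "continuous_on UNIV (\<lambda>t. m \<bullet> t - K (torus_exp t))"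
    using assms(2)
    by (intro continuous_intros continuous_on_compose2[OF assms(2) continuous_on_torus_exp]) auto
  then have "m \<bullet> axis i 1 - K (torus_exp (axis i 1)) = m \<bullet> 0 - K (torus_exp 0)" for i
    using assms(3) by (intro continuous_Ints_valued_constant[of UNIV]) auto
  moreover have axis: "torus_exp (axis i 1) = 1" for i
    using torus_exp_add_int_vec[of "axis i 1" 0] by simp
  ultimately have "m $ i = 0" for i
    by (simp add: inner_axis axis)
  then show ?thesis
    by (simp add: vec_eq_iff)
qed

lemma rat_vec_common_denominator:
  fixes x :: "rat^'n"
  obtains d :: int where "d \<noteq> 0" "\<And>j. of_int d * x $ j \<in> \<int>"
proof
  define den where "den j = snd (quotient_of (x $ j))" for j
  have pos: "0 < den j" for j
    by (simp add: den_def quotient_of_denom_pos')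
  then show "(\<Prod>j\<in>UNIV. den j) \<noteq> 0"
    by (simp add: less_imp_neq[symmetric])
  show "of_int (\<Prod>j\<in>UNIV. den j) * x $ j \<in> \<int>" for j
  proof -
    have "x $ j = of_int (fst (quotient_of (x $ j))) / of_int (den j)"
      by (simp add: den_def quotient_of_div)
    moreover have "(\<Prod>j\<in>UNIV. den j) = den j * (\<Prod>k\<in>UNIV - {j}. den k)"
      by (simp add: prod.remove)
    ultimately have "of_int (\<Prod>j\<in>UNIV. den j) * x $ j
        = of_int (fst (quotient_of (x $ j)) * (\<Prod>k\<in>UNIV - {j}. den k))"
      using pos[of j] by (simp add: field_simps)
    then show ?thesis
      by (metis Ints_of_int)
  qed
qed

lemma det_of_rat: "det (\<chi> i j. of_rat (Q $ i $ j) :: real^'n^'n) = of_rat (det Q)"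
  by (simp add: det_def of_rat_sum of_rat_mult of_rat_prod)

lemma singular_int_matrix_has_int_left_kernel:
  fixes A :: "real^'n^'n"
  assumes "int_matrix A" "det A = 0"
  obtains m where "int_vec m" "m \<noteq> 0" "m v* A = 0"
proof -
  define Q :: "rat^'n^'n" where "Q = (\<chi> i j. of_int \<lfloor>A $ i $ j\<rfloor>)"
  have A: "A = (\<chi> i j. of_rat (Q $ i $ j))"
    using assms(1) by (simp add: Q_def vec_eq_iff int_matrix_def)
  then have "\<not> invertible Q"
    using assms(2) by (simp add: invertible_det_nz det_of_rat)
  then obtain c i where c: "(\<Sum>i\<in>UNIV. c i *s row i Q) = 0" and "c i \<noteq> 0"
    unfolding invertible_right_inverse matrix_right_invertible_independent_rows by blast
  obtain d where d: "d \<noteq> 0" "\<And>j. of_int d * c j \<in> \<int>"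
    using rat_vec_common_denominator[of "\<chi> i. c i"] by auto
  show ?thesis
  proof
    show "int_vec (\<chi> j. of_rat (of_int d * c j))"
      using d(2) by (auto simp: int_vec_def) (metis Ints_cases Ints_of_int of_rat_of_int_eq)
    show "(\<chi> j. of_rat (of_int d * c j)) \<noteq> 0"
      using \<open>c i \<noteq> 0\<close> d(1) by (auto simp: vec_eq_iff)
    have "(\<Sum>i\<in>UNIV. c i * Q $ i $ j) = 0" for j
      using c by (simp add: vec_eq_iff row_def)
    then show "(\<chi> j. of_rat (of_int d * c j)) v* A = 0"
      by (simp add: A vec_eq_iff vector_matrix_mult_def of_rat_sum[symmetric]
          of_rat_mult[symmetric] sum_distrib_left[symmetric] mult_ac del: of_rat_sum of_rat_mult)
  qed
qed

lemma continuous_descends_along_torus_map: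
  fixes \<Phi> :: "complex^'n \<Rightarrow> complex^'m" and w :: "real^'n \<Rightarrow> 'b::topological_space"
  assumes "continuous_on torus \<Phi>" "\<Phi> ` torus = torus" "continuous_on UNIV w"
    and "\<And>s t. \<Phi> (torus_exp s) = \<Phi> (torus_exp t) \<Longrightarrow> w s = w t"
  obtains K where "continuous_on torus K" "\<And>t. K (\<Phi> (torus_exp t)) = w t"
proof -
  let ?X = "top_of_set (cbox (0::real^'n) 1)"
  have "continuous_on (cbox 0 1) (\<lambda>t. \<Phi> (torus_exp t))"
    using torus_exp_cbox by (intro continuous_on_compose2[OF assms(1) continuous_on_torus_exp]) auto
  then have "continuous_map ?X torus_top (\<lambda>t. \<Phi> (torus_exp t))"
    using assms(2) torus_exp_cbox by (auto simp: torus_top_def)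
  moreover have "(\<lambda>t. \<Phi> (torus_exp t)) ` cbox 0 1 = torus"
    using assms(2) by (simp add: torus_exp_cbox flip: image_image)
  ultimately have "quotient_map ?X torus_top (\<lambda>t. \<Phi> (torus_exp t))"
    by (intro continuous_imp_quotient_map)
      (auto simp: torus_top_def compact_space_subtopology intro: Hausdorff_space_subtopology)
  moreover have "continuous_map ?X euclidean w"
    using assms(3) by (auto elim: continuous_on_subset)
  ultimately obtain K where K: "continuous_map torus_top euclidean K"
    and Kw: "\<And>s. s \<in> cbox 0 1 \<Longrightarrow> K (\<Phi> (torus_exp s)) = w s"
  proof (rule quotient_map_lift_exists)
    show "w s = w t" if "\<Phi> (torus_exp s) = \<Phi> (torus_exp t)" for s t
      using assms(4)[OF that] .
  qed auto
  show ?thesis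
  proof (rule that)
    show "continuous_on torus K"
      using K by (simp add: torus_top_def)
    fix t :: "real^'n"
    obtain s v where "s \<in> cbox 0 1" "int_vec v" "t = s + v"
      by (rule int_vec_decomposition)
    then have "torus_exp t = torus_exp s"
      by (simp add: torus_exp_add_int_vec)
    then show "K (\<Phi> (torus_exp t)) = w t"
      using Kw[OF \<open>s \<in> cbox 0 1\<close>] assms(4)[of s t] by simp
  qed
qed

lemma openin_quotient_topology:
  "openin (quotient_topology X f) U \<longleftrightarrow> U \<subseteq> f ` topspace X \<and> openin X {x \<in> topspace X. f x \<in> U}"
proof -
  have "istopology (\<lambda>U. U \<subseteq> f ` topspace X \<and> openin X {x \<in> topspace X. f x \<in> U})"
    unfolding istopology_def
  proof (rule conjI; intro allI impI)
    fix S T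
    assume "S \<subseteq> f ` topspace X \<and> openin X {x \<in> topspace X. f x \<in> S}"
      and "T \<subseteq> f ` topspace X \<and> openin X {x \<in> topspace X. f x \<in> T}"
    moreover have "{x \<in> topspace X. f x \<in> S \<inter> T}
        = {x \<in> topspace X. f x \<in> S} \<inter> {x \<in> topspace X. f x \<in> T}"
      by auto
    ultimately show "S \<inter> T \<subseteq> f ` topspace X \<and> openin X {x \<in> topspace X. f x \<in> S \<inter> T}"
      by auto
  next
    fix \<K>
    assume \<K>: "\<forall>U\<in>\<K>. U \<subseteq> f ` topspace X \<and> openin X {x \<in> topspace X. f x \<in> U}"
    have "{x \<in> topspace X. f x \<in> \<Union>\<K>} = (\<Union>U\<in>\<K>. {x \<in> topspace X. f x \<in> U})"
      by auto
    with \<K> show "\<Union>\<K> \<subseteq> f ` topspace X \<and> openin X {x \<in> topspace X. f x \<in> \<Union>\<K>}"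
      by auto
  qed
  then show ?thesis
    by (simp add: quotient_topology_def)
qed

lemma topspace_quotient_topology: "topspace (quotient_topology X f) = f ` topspace X"
proof (rule antisym)
  show "topspace (quotient_topology X f) \<subseteq> f ` topspace X"
    using openin_quotient_topology[of X f "topspace (quotient_topology X f)"] by auto
  have "{x \<in> topspace X. f x \<in> f ` topspace X} = topspace X"
    by auto
  then have "openin (quotient_topology X f) (f ` topspace X)"
    by (simp add: openin_quotient_topology)
  then show "f ` topspace X \<subseteq> topspace (quotient_topology X f)"
    by (rule openin_subset)
qed

lemma continuous_map_quotient_topology: "continuous_map X (quotient_topology X f) f"
  by (auto simp: continuous_map_def openin_quotient_topology topspace_quotient_topology)

lemma (in group_action) orbit_action_eq:
  assumes "g \<in> carrier G" "x \<in> E"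
  shows "orbit G \<phi> (\<phi> g x) = orbit G \<phi> x"
proof -
  have gx: "\<phi> g x \<in> E" "\<phi> g x \<in> orbit G \<phi> x"
    using assms element_image by (auto simp: orbit_def)
  have "y \<in> orbit G \<phi> (\<phi> g x) \<longleftrightarrow> y \<in> orbit G \<phi> x" if "y \<in> E" for y
    using assms(2) gx that orbit_sym orbit_trans by meson
  moreover have "orbit G \<phi> z \<subseteq> E" if "z \<in> E" for z
    using that element_image by (auto simp: orbit_def)
  ultimately show ?thesis
    using assms(2) gx(1) by blast
qed

lemma (in group_action) orbit_eq_imp_related:
  assumes "x \<in> E" "orbit G \<phi> x = orbit G \<phi> y"
  obtains g where "g \<in> carrier G" "x = \<phi> g y"
  using orbit_refl[OF assms(1)] assms(2) by (auto simp: orbit_def)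

lemma (in group_action) orbit_space_homeomorphism_composite:
  assumes "E = topspace X" and h: "homeomorphic_map (orbit_space G \<phi> X) Y h"
  shows "continuous_map X Y (\<lambda>x. h (orbit G \<phi> x))"
    and "(\<lambda>x. h (orbit G \<phi> x)) ` topspace X = topspace Y"
    and "\<And>x y. x \<in> E \<Longrightarrow> y \<in> E \<Longrightarrow> h (orbit G \<phi> x) = h (orbit G \<phi> y) \<Longrightarrow> \<exists>g\<in>carrier G. x = \<phi> g y"
proof -
  have "continuous_map X (orbit_space G \<phi> X) (orbit G \<phi>)"
    unfolding orbit_space_def by (rule continuous_map_quotient_topology)
  then show "continuous_map X Y (\<lambda>x. h (orbit G \<phi> x))"
    using continuous_map_compose[OF _ homeomorphic_imp_continuous_map[OF h]] by (simp add: o_def)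
  show "(\<lambda>x. h (orbit G \<phi> x)) ` topspace X = topspace Y"
    using homeomorphic_imp_surjective_map[OF h]
    by (simp add: orbit_space_def topspace_quotient_topology image_image)
  fix x y
  assume "x \<in> E" "y \<in> E" "h (orbit G \<phi> x) = h (orbit G \<phi> y)"
  then have "orbit G \<phi> x = orbit G \<phi> y"
    using homeomorphic_imp_injective_map[OF h] assms(1)
    by (auto simp: orbit_space_def topspace_quotient_topology inj_on_def)
  then show "\<exists>g\<in>carrier G. x = \<phi> g y"
    using orbit_eq_imp_related[OF \<open>x \<in> E\<close>] by blast
qed

(* \<Phi> stands for the orbit map of \<Gamma> followed by a homeomorphism of the orbit space onto the
   torus; A is the degree matrix of its lift \<Lambda>. *)
locale torus_orbit_map =
  fixes \<Phi> :: "complex^'n \<Rightarrow> complex^'n"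
    and \<Gamma> :: "(complex^'n \<Rightarrow> complex^'n) set"
    and \<Lambda> :: "real^'n \<Rightarrow> real^'n"
    and A :: "real^'n^'n"
  assumes \<Phi>_continuous: "continuous_on torus \<Phi>"
    and \<Phi>_surjective: "\<Phi> ` torus = torus"
    and \<Gamma>_automorphisms: "\<And>\<gamma>. \<gamma> \<in> \<Gamma> \<Longrightarrow> torus_automorphism \<gamma>"
    and \<Phi>_invariant: "\<And>\<gamma> x. \<gamma> \<in> \<Gamma> \<Longrightarrow> x \<in> torus \<Longrightarrow> \<Phi> (\<gamma> x) = \<Phi> x"
    and \<Phi>_fibres: "\<And>x y. x \<in> torus \<Longrightarrow> y \<in> torus \<Longrightarrow> \<Phi> x = \<Phi> y \<Longrightarrow> \<exists>\<gamma>\<in>\<Gamma>. x = \<gamma> y"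
    and \<Lambda>_continuous: "continuous_on UNIV \<Lambda>"
    and \<Lambda>_lift: "\<And>t. \<Phi> (torus_exp t) = torus_exp (\<Lambda> t)"
    and A_integral: "int_matrix A"
    and \<Lambda>_lattice: "\<And>t v. int_vec v \<Longrightarrow> \<Lambda> (t + v) = \<Lambda> t + A *v v"
begin

lemma automorphism_lift:
  assumes "\<gamma> \<in> \<Gamma>"
  obtains B C where "continuous_on UNIV B" "\<And>t. \<gamma> (torus_exp t) = torus_exp (B t)"
    and "int_matrix C" "\<And>t v. int_vec v \<Longrightarrow> B (t + v) = B t + C *v v"
proof -
  have "continuous_on torus \<gamma>" "\<gamma> ` torus \<subseteq> torus"
    using \<Gamma>_automorphisms[OF assms] by (auto simp: torus_automorphism_def torus_top_def)
  then show ?thesis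
    by (rule torus_map_lift) (rule that)
qed

lemma \<Lambda>_shift_along_automorphism_lift:
  assumes "\<gamma> \<in> \<Gamma>" "continuous_on UNIV B" "\<And>t. \<gamma> (torus_exp t) = torus_exp (B t)"
  shows "\<Lambda> (B t) = \<Lambda> t + (\<Lambda> (B 0) - \<Lambda> 0)"
proof -
  have "\<Lambda> (B t) - \<Lambda> t = \<Lambda> (B 0) - \<Lambda> 0"
  proof (rule torus_lifts_differ_by_constant[of UNIV])
    show "continuous_on UNIV (\<lambda>t. \<Lambda> (B t))"
      by (rule continuous_on_compose2[OF \<Lambda>_continuous assms(2)]) auto
    show "torus_exp (\<Lambda> (B s)) = torus_exp (\<Lambda> s)" for s
      using \<Phi>_invariant[OF assms(1) torus_exp_in_torus[of s]] by (simp add: assms(3) flip: \<Lambda>_lift)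
  qed (auto intro: \<Lambda>_continuous)
  then show ?thesis
    by (simp add: algebra_simps)
qed

lemma left_kernel_functional_periodic:
  assumes "m v* A = 0" "int_vec v"
  shows "m \<bullet> \<Lambda> (t + v) = m \<bullet> \<Lambda> t"
  using assms by (simp add: \<Lambda>_lattice inner_add_right flip: dot_lmul_matrix)

lemma left_kernel_functional_invariant:
  assumes "m v* A = 0" "\<gamma> \<in> \<Gamma>" "continuous_on UNIV B" "\<And>t. \<gamma> (torus_exp t) = torus_exp (B t)"
  shows "m \<bullet> \<Lambda> (B t) = m \<bullet> \<Lambda> t"
proof -
  define c where "c = m \<bullet> (\<Lambda> (B 0) - \<Lambda> 0)"
  have step: "m \<bullet> \<Lambda> (B s) = m \<bullet> \<Lambda> s + c" for s
    using \<Lambda>_shift_along_automorphism_lift[OF assms(2-4), of s] by (simp add: c_def inner_add_right)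
  have cont: "continuous_on UNIV (\<lambda>s. m \<bullet> \<Lambda> s)"
    by (intro continuous_intros \<Lambda>_continuous)
  obtain C where bound: "\<And>s. norm (m \<bullet> \<Lambda> s) \<le> C"
    using lattice_periodic_bounded[OF cont left_kernel_functional_periodic[OF assms(1)]] by blast
  have iterate: "m \<bullet> \<Lambda> ((B ^^ n) t) = m \<bullet> \<Lambda> t + real n * c" for n
    by (induction n) (simp_all add: step algebra_simps)
  have "\<bar>real n * c\<bar> \<le> 2 * C" for n
    using bound[of "(B ^^ n) t"] bound[of t] iterate[of n] unfolding real_norm_def by linarith
  then have "c = 0"
    by (rule bounded_multiples_imp_zero)
  then show ?thesis
    using step by simp
qed

lemma left_kernel_functional_fibrewise_constant:
  assumes "m v* A = 0" "\<Phi> (torus_exp s) = \<Phi> (torus_exp t)"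
  shows "m \<bullet> \<Lambda> s = m \<bullet> \<Lambda> t"
proof -
  from \<Phi>_fibres[OF torus_exp_in_torus torus_exp_in_torus assms(2)]
  obtain \<gamma> where "\<gamma> \<in> \<Gamma>" and \<gamma>: "torus_exp s = \<gamma> (torus_exp t)" ..
  obtain B where B: "continuous_on UNIV B" "\<And>t. \<gamma> (torus_exp t) = torus_exp (B t)"
    using automorphism_lift[OF \<open>\<gamma> \<in> \<Gamma>\<close>] by metis
  have "int_vec (s - B t)"
    using \<gamma> B(2) by (simp add: torus_exp_eq_iff)
  then have "m \<bullet> \<Lambda> s = m \<bullet> \<Lambda> (B t)"
    using left_kernel_functional_periodic[OF assms(1), of "s - B t" "B t"] by simp
  also have "\<dots> = m \<bullet> \<Lambda> t"
    by (rule left_kernel_functional_invariant[OF assms(1) \<open>\<gamma> \<in> \<Gamma>\<close> B])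
  finally show ?thesis .
qed

lemma int_left_kernel_trivial:
  assumes "int_vec m" "m v* A = 0"
  shows "m = 0"
proof -
  have cont: "continuous_on UNIV (\<lambda>t. m \<bullet> \<Lambda> t)"
    by (intro continuous_intros \<Lambda>_continuous)
  obtain K where K: "continuous_on torus K" and K\<Lambda>: "\<And>t. K (\<Phi> (torus_exp t)) = m \<bullet> \<Lambda> t"
    using continuous_descends_along_torus_map[OF \<Phi>_continuous \<Phi>_surjective cont
          left_kernel_functional_fibrewise_constant[OF assms(2)]] by blast
  have "m \<bullet> s - K (torus_exp s) \<in> \<int>" for s
  proof -
    have "torus_exp s \<in> \<Phi> ` torus_exp ` cbox 0 1"
      by (simp add: \<Phi>_surjective torus_exp_cbox)
    then obtain t where t: "torus_exp s = torus_exp (\<Lambda> t)"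
      by (auto simp: \<Lambda>_lift)
    then have "m \<bullet> (s - \<Lambda> t) \<in> \<int>"
      by (intro inner_int_vec assms(1)) (simp add: torus_exp_eq_iff)
    then show ?thesis
      using t K\<Lambda>[of t] by (simp add: \<Lambda>_lift inner_diff_right)
  qed
  with assms(1) K show ?thesis
    by (rule int_vec_character_has_no_continuous_logarithm)
qed

lemma degree_matrix_injective:
  assumes "A *v x = A *v y"
  shows "x = y"
proof -
  have "det A \<noteq> 0"
    using singular_int_matrix_has_int_left_kernel[OF A_integral] int_left_kernel_trivial by metis
  then obtain B where "B ** A = mat 1"
    using invertible_det_nz invertible_left_inverse by blast
  then have "inj ((*v) A)"
    using matrix_left_invertible_injective by blast
  then show ?thesis
    using assms by (rule injD)
qed

lemma automorphism_lift_fixes_lattice: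
  assumes "\<gamma> \<in> \<Gamma>" "continuous_on UNIV B" "\<And>t. \<gamma> (torus_exp t) = torus_exp (B t)"
    and "int_matrix C" "\<And>t v. int_vec v \<Longrightarrow> B (t + v) = B t + C *v v" "int_vec v"
  shows "B (t + v) = B t + v"
proof -
  have "\<Lambda> (B t) + A *v (C *v v) = \<Lambda> (B (t + v))"
    using assms(4-6) by (simp add: \<Lambda>_lattice int_vec_matrix_vector_mult)
  also have "\<dots> = \<Lambda> (t + v) + (\<Lambda> (B 0) - \<Lambda> 0)"
    by (rule \<Lambda>_shift_along_automorphism_lift[OF assms(1-3)])
  also have "\<dots> = \<Lambda> (B t) + A *v v"
    using \<Lambda>_shift_along_automorphism_lift[OF assms(1-3), of t] assms(6)
    by (simp add: \<Lambda>_lattice algebra_simps)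
  finally have "A *v (C *v v) = A *v v"
    by simp
  then have "C *v v = v"
    by (rule degree_matrix_injective)
  with assms(5,6) show ?thesis
    by simp
qed

theorem automorphisms_trivial:
  assumes "\<gamma> \<in> \<Gamma>" "x \<in> torus"
  shows "\<gamma> x = x"
proof -
  obtain B C where B: "continuous_on UNIV B" "\<And>t. \<gamma> (torus_exp t) = torus_exp (B t)"
    and C: "int_matrix C" "\<And>t v. int_vec v \<Longrightarrow> B (t + v) = B t + C *v v"
    using automorphism_lift[OF assms(1)] by metis
  have hom: "\<forall>z\<in>torus. \<forall>w\<in>torus. \<gamma> (z * w) = \<gamma> z * \<gamma> w" and "\<gamma> ` torus \<subseteq> torus"
    using \<Gamma>_automorphisms[OF assms(1)] unfolding torus_automorphism_def bij_betw_def by blast+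
  then show ?thesis
    using B automorphism_lift_fixes_lattice[OF assms(1) B C] assms(2)
    by (rule torus_hom_eq_id_if_lift_fixes_lattice)
qed

end

theorem lemma2p2:
  fixes F (structure)
    and \<phi> :: "'g \<Rightarrow> complex ^ 'n \<Rightarrow> complex ^ 'n"
  assumes "group F"
    and "finite (carrier F)"
    and "group_action F torus \<phi>"
    and "\<forall>g \<in> carrier F. torus_automorphism (\<phi> g)"
    and "orbit_space F \<phi> torus_top homeomorphic_space (torus_top :: (complex ^ 'n) topology)"
  shows "\<forall>g \<in> carrier F. \<forall>x \<in> torus. \<phi> g x = x"
proof -
  interpret group_action F torus \<phi>
    by (fact assms(3))
  obtain h :: "(complex^'n) set \<Rightarrow> complex^'n"
    where "homeomorphic_map (orbit_space F \<phi> torus_top) torus_top h"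
    using assms(5) unfolding homeomorphic_space by blast
  from orbit_space_homeomorphism_composite[OF _ this]
  have continuous: "continuous_on torus (\<lambda>x. h (orbit F \<phi> x))"
    and onto: "(\<lambda>x. h (orbit F \<phi> x)) ` torus = torus"
    and fibres: "\<And>x y. x \<in> torus \<Longrightarrow> y \<in> torus \<Longrightarrow> h (orbit F \<phi> x) = h (orbit F \<phi> y)
      \<Longrightarrow> \<exists>g\<in>carrier F. x = \<phi> g y"
    by (auto simp: torus_top_def)
  obtain \<Lambda> A where "continuous_on UNIV \<Lambda>" "\<And>t. h (orbit F \<phi> (torus_exp t)) = torus_exp (\<Lambda> t)"
    and "int_matrix A" "\<And>t v. int_vec v \<Longrightarrow> \<Lambda> (t + v) = \<Lambda> t + A *v v"
    using torus_map_lift[OF continuous equalityD1[OF onto]] by metis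
  then interpret torus_orbit_map "\<lambda>x. h (orbit F \<phi> x)" "\<phi> ` carrier F" \<Lambda> A
    using assms(4) continuous onto by unfold_locales (auto simp: orbit_action_eq dest: fibres)
  show ?thesis
    using automorphisms_trivial by simp
qed

end
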